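(* Let $\mathscr D:\mathscr N=\mathscr N_1\cup\cdots\cup\mathscr N_k$ be a $\mathscr C_{\mathscr D}$-decomposition of a chemical reaction network $\mathscr N$ with $d/2<\ell$, where $d=|\mathscr C_{\mathscr D}|$ and $\ell$ is the number of linkage classes of $\mathscr N$. Suppose that each linkage class of $\mathscr N$ either contains no common complex or contains exactly two common complexes which are connected by a unique path. Then $\mathscr D$ is incidence independent.
   Context: A CRN $\mathscr N=(\mathscr S,\mathscr C,\mathscr R)$ is viewed as a directed graph on its complexes with arcs its reactions; paths are paths in the underlying undirected graph and linkage classes are its connected components. A decomposition $\mathscr N=\mathscr N_1\cup\cdots\cup\mathscr N_k$ ($k\ge2$) is given by a partition $\{\mathscr R_1,\dots,\mathscr R_k\}$ of the reaction set; $\mathscr N_i$ has reactions $\mathscr R_i$ and complex set $\mathscr C_i$ consisting of complexes occurring in reactions of $\mathscr R_i$. The set $\mathscr C_{\mathscr D}$ of common complexes consists of the complexes in the complex sets of at least two distinct subnetworks. A $\mathscr C_{\mathscr D}$-decomposition is one with $\mathscr C_i\cap\mathscr C_j=\mathscr C_{\mathscr D}$ for all $i\ne j$. With $n,\ell$ the numbers of complexes and linkage classes of $\mathscr N$ and $n_i,\ell_i$ those of $\mathscr N_i$, the decomposition is incidence independent if the image of the incidence map of $\mathscr N$ (the linear map $\mathbb R^{\mathscr R}\to\mathbb R^{\mathscr C}$ sending $y\to y'$ to $\omega_{y'}-\omega_y$) is the direct sum of the images of the incidence maps of the $\mathscr N_i$, equivalently $n-\ell=\sum_i(n_i-\ell_i)$.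 *)

theory Defs
  imports Complex_Main
begin

text \<open>A reaction network is given by its finite set of reactions, each reaction a pair
  (reactant complex, product complex) with distinct complexes. Species play no role here, so complexes are an abstract type.\<close>

definition crn :: "('c \<times> 'c) set \<Rightarrow> bool" where
  "crn R \<longleftrightarrow> finite R \<and> (\<forall>(y, y') \<in> R. y \<noteq> y')"

definition complexes :: "('c \<times> 'c) set \<Rightarrow> 'c set" where
  "complexes R = fst ` R \<union> snd ` R"

definition linked :: "('c \<times> 'c) set \<Rightarrow> ('c \<times> 'c) set" where
  "linked R = (R \<union> R\<inverse>)\<^sup>* \<inter> (complexes R \<times> complexes R)"

definition linkage_classes :: "('c \<times> 'c) set \<Rightarrow> 'c set set" where
  "linkage_classes R = complexes R // linked R"

definition n_cplx :: "('c \<times> 'c) set \<Rightarrow> nat" where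
  "n_cplx R = card (complexes R)"

definition n_lc :: "('c \<times> 'c) set \<Rightarrow> nat" where
  "n_lc R = card (linkage_classes R)"

text \<open>A path from a to b in the underlying undirected (multi)graph: a list of vertices vs
  (pairwise distinct) and a list of reactions es, the i-th reaction joining vs!i and
  vs!(i+1) in either orientation.\<close>

definition is_path :: "('c \<times> 'c) set \<Rightarrow> 'c list \<times> ('c \<times> 'c) list \<Rightarrow> 'c \<Rightarrow> 'c \<Rightarrow> bool" where
  "is_path R p a b \<longleftrightarrow>
     (let vs = fst p; es = snd p in
        length vs = Suc (length es) \<and> hd vs = a \<and> last vs = b \<and> distinct vs \<and>
        (\<forall>i < length es. es ! i \<in> R \<and>
             (es ! i = (vs ! i, vs ! Suc i) \<or> es ! i = (vs ! Suc i, vs ! i))))"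

definition decomposition :: "('c \<times> 'c) set \<Rightarrow> nat \<Rightarrow> (nat \<Rightarrow> ('c \<times> 'c) set) \<Rightarrow> bool" where
  "decomposition R k Rs \<longleftrightarrow> k \<ge> 2 \<and> (\<forall>i<k. Rs i \<noteq> {}) \<and>
     (\<forall>i<k. \<forall>j<k. i \<noteq> j \<longrightarrow> Rs i \<inter> Rs j = {}) \<and> (\<Union>i<k. Rs i) = R"

definition common_complexes :: "nat \<Rightarrow> (nat \<Rightarrow> ('c \<times> 'c) set) \<Rightarrow> 'c set" where
  "common_complexes k Rs =
     {c. \<exists>i<k. \<exists>j<k. i \<noteq> j \<and> c \<in> complexes (Rs i) \<and> c \<in> complexes (Rs j)}"

definition CD_decomposition :: "('c \<times> 'c) set \<Rightarrow> nat \<Rightarrow> (nat \<Rightarrow> ('c \<times> 'c) set) \<Rightarrow> bool" where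
  "CD_decomposition R k Rs \<longleftrightarrow> decomposition R k Rs \<and>
     (\<forall>i<k. \<forall>j<k. i \<noteq> j \<longrightarrow> complexes (Rs i) \<inter> complexes (Rs j) = common_complexes k Rs)"

text \<open>Incidence map R^R \<rightarrow> R^C sending the reaction y \<rightarrow> y' to \<omega>_y' - \<omega>_y;
  vectors in R^C are represented as functions 'c \<Rightarrow> real (zero outside the complexes).\<close>

definition incidence :: "('c \<times> 'c) set \<Rightarrow> (('c \<times> 'c) \<Rightarrow> real) \<Rightarrow> 'c \<Rightarrow> real" where
  "incidence R a = (\<lambda>z. \<Sum>r\<in>R. a r * ((if snd r = z then 1 else 0) - (if fst r = z then 1 else 0)))"

definition incidence_image :: "('c \<times> 'c) set \<Rightarrow> ('c \<Rightarrow> real) set" where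
  "incidence_image R = range (incidence R)"

definition incidence_independent :: "('c \<times> 'c) set \<Rightarrow> nat \<Rightarrow> (nat \<Rightarrow> ('c \<times> 'c) set) \<Rightarrow> bool" where
  "incidence_independent R k Rs \<longleftrightarrow>
     incidence_image R = {(\<lambda>z. \<Sum>i<k. v i z) | v. \<forall>i<k. v i \<in> incidence_image (Rs i)} \<and>
     (\<forall>v. (\<forall>i<k. v i \<in> incidence_image (Rs i)) \<and> (\<forall>z. (\<Sum>i<k. v i z) = 0) \<longrightarrow> (\<forall>i<k. \<forall>z. v i z = 0))"

end

theory Submission
  imports Defs
begin

text \<open>Since the subnetworks partition the reactions, the image of the incidence map of N is
  always the sum of the images of the subnetworks, and the sum is direct as soon as every
  coefficient vector a in the kernel of the incidence map of N lies in the kernel of the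
  incidence map of each subnetwork. Summing an incidence vector over a set A of complexes gives
  the net flux of a into A. At a complex that is not common, only one subnetwork contributes,
  so there the claim is immediate. In a linkage class whose common complexes are x and y,
  removing a reaction e of the unique path from x to y separates x from y. Let A be the
  component of x after this removal: only e crosses the boundary of A and no reaction crosses
  the boundary of the linkage class, so both net fluxes vanish for N, hence a e = 0, hence they
  vanish for every subnetwork. All complexes of A other than x, and of the linkage class other
  than x and y, are not common, so these two sums isolate the values at x and at y.\<close>

lemma complexes_mono: "S \<subseteq> R \<Longrightarrow> complexes S \<subseteq> complexes R"
  unfolding complexes_def by blast

lemma incidence_eq_0_if_notin_complexes:
  assumes "z \<notin> complexes S"
  shows "incidence S a z = 0"
  unfolding incidence_def
  by (rule sum.neutral) (use assms in \<open>force simp: complexes_def\<close>)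

lemma incidence_cong:
  assumes "\<And>r. r \<in> S \<Longrightarrow> a r = b r"
  shows "incidence S a = incidence S b"
  unfolding incidence_def using assms by (intro ext sum.cong) auto

lemma decomposition_block_subset: "decomposition R k Rs \<Longrightarrow> i < k \<Longrightarrow> Rs i \<subseteq> R"
  unfolding decomposition_def by blast

lemma common_complexes_subset:
  assumes "decomposition R k Rs"
  shows "common_complexes k Rs \<subseteq> complexes R"
  using complexes_mono[OF decomposition_block_subset[OF assms]]
  unfolding common_complexes_def by blast

lemma incidence_decomposition:
  assumes "finite R" and "decomposition R k Rs"
  shows "incidence R a z = (\<Sum>i<k. incidence (Rs i) a z)"
proof -
  from assms(2) have R: "R = (\<Union>i<k. Rs i)"
    and disj: "\<forall>i\<in>{..<k}. \<forall>j\<in>{..<k}. i \<noteq> j \<longrightarrow> Rs i \<inter> Rs j = {}"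
    by (auto simp: decomposition_def)
  with assms(1) have "\<forall>i\<in>{..<k}. finite (Rs i)"
    by (auto intro: finite_subset)
  with disj show ?thesis
    unfolding incidence_def R by (simp add: sum.UNION_disjoint)
qed

lemma decomposition_incidence_images_glue:
  assumes "decomposition R k Rs" and "\<forall>i<k. v i \<in> incidence_image (Rs i)"
  shows "\<exists>b. \<forall>i<k. v i = incidence (Rs i) b"
proof -
  from assms(2) have "\<forall>i\<in>{..<k}. \<exists>a. v i = incidence (Rs i) a"
    by (auto simp: incidence_image_def)
  from bchoice[OF this] obtain a where a: "\<forall>i\<in>{..<k}. v i = incidence (Rs i) (a i)"
    by blast
  define b where "b r = a (THE j. j < k \<and> r \<in> Rs j) r" for r
  have "v i = incidence (Rs i) b" if "i < k" for i
  proof -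
    have "b r = a i r" if "r \<in> Rs i" for r
    proof -
      from \<open>i < k\<close> \<open>r \<in> Rs i\<close> assms(1) have "(THE j. j < k \<and> r \<in> Rs j) = i"
        by (intro the_equality) (auto simp: decomposition_def)
      then show ?thesis by (simp add: b_def)
    qed
    then have "incidence (Rs i) b = incidence (Rs i) (a i)" by (rule incidence_cong)
    with a \<open>i < k\<close> show ?thesis by simp
  qed
  then show ?thesis by blast
qed

lemma incidence_image_decomposition:
  assumes "finite R" and "decomposition R k Rs"
  shows "incidence_image R = {(\<lambda>z. \<Sum>i<k. v i z) | v. \<forall>i<k. v i \<in> incidence_image (Rs i)}"
proof (intro equalityI subsetI)
  fix x assume "x \<in> incidence_image R"
  then obtain a where "x = incidence R a" by (auto simp: incidence_image_def)
  then have "x = (\<lambda>z. \<Sum>i<k. incidence (Rs i) a z)"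
    using incidence_decomposition[OF assms] by auto
  then show "x \<in> {(\<lambda>z. \<Sum>i<k. v i z) | v. \<forall>i<k. v i \<in> incidence_image (Rs i)}"
    by (auto simp: incidence_image_def)
next
  fix x assume "x \<in> {(\<lambda>z. \<Sum>i<k. v i z) | v. \<forall>i<k. v i \<in> incidence_image (Rs i)}"
  then obtain v where x: "x = (\<lambda>z. \<Sum>i<k. v i z)" and v: "\<forall>i<k. v i \<in> incidence_image (Rs i)"
    by blast
  from assms(2) v obtain b where "\<forall>i<k. v i = incidence (Rs i) b"
    by (blast dest: decomposition_incidence_images_glue)
  then have "x = incidence R b"
    unfolding x by (auto simp: incidence_decomposition[OF assms])
  then show "x \<in> incidence_image R" by (simp add: incidence_image_def)
qed

lemma incidence_independentI:
  assumes "finite R" and "decomposition R k Rs"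
    and ker: "\<And>a i. incidence R a = (\<lambda>_. 0) \<Longrightarrow> i < k \<Longrightarrow> incidence (Rs i) a = (\<lambda>_. 0)"
  shows "incidence_independent R k Rs"
  unfolding incidence_independent_def
proof (intro conjI allI impI)
  show "incidence_image R = {(\<lambda>z. \<Sum>i<k. v i z) | v. \<forall>i<k. v i \<in> incidence_image (Rs i)}"
    using assms(1,2) by (rule incidence_image_decomposition)
next
  fix v i z
  assume v: "(\<forall>i<k. v i \<in> incidence_image (Rs i)) \<and> (\<forall>z. (\<Sum>i<k. v i z) = 0)" and "i < k"
  from assms(2) v obtain b where b: "\<forall>i<k. v i = incidence (Rs i) b"
    by (blast dest: decomposition_incidence_images_glue)
  have "incidence R b = (\<lambda>_. 0)"
    using v b by (auto simp: incidence_decomposition[OF assms(1,2)])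
  with ker b \<open>i < k\<close> show "v i z = 0" by metis
qed

lemma incidence_block_eq_0_if_not_common:
  assumes "finite R" and "decomposition R k Rs" and ker: "incidence R a = (\<lambda>_. 0)"
    and "i < k" and "z \<notin> common_complexes k Rs"
  shows "incidence (Rs i) a z = 0"
proof (cases "z \<in> complexes (Rs i)")
  case True
  with assms(4,5) have "z \<notin> complexes (Rs j)" if "j < k" "j \<noteq> i" for j
    using that unfolding common_complexes_def by blast
  then have "(\<Sum>j<k. incidence (Rs j) a z) = (\<Sum>j\<in>{i}. incidence (Rs j) a z)"
    using \<open>i < k\<close> by (intro sum.mono_neutral_right) (auto intro: incidence_eq_0_if_notin_complexes)
  then show ?thesis
    using ker by (simp add: incidence_decomposition[OF assms(1,2), symmetric])
next
  case False
  then show ?thesis by (rule incidence_eq_0_if_notin_complexes)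
qed

lemma sum_incidence_eq_flux:
  assumes "finite A"
  shows "(\<Sum>z\<in>A. incidence S a z) = (\<Sum>r\<in>S. a r * (of_bool (snd r \<in> A) - of_bool (fst r \<in> A)))"
  unfolding incidence_def
  by (subst sum.swap) (simp add: assms sum_distrib_left[symmetric] sum_subtractf of_bool_def)

lemma sum_incidence_eq_0_if_one_crossing:
  assumes "finite R" and "S \<subseteq> R" and ker: "incidence R a = (\<lambda>_. 0)" and "finite A"
    and no_crossing: "\<forall>r\<in>R - {e}. fst r \<in> A \<longleftrightarrow> snd r \<in> A"
  shows "(\<Sum>z\<in>A. incidence S a z) = 0"
proof -
  define flux where "flux r = a r * (of_bool (snd r \<in> A) - of_bool (fst r \<in> A))" for r
  have local_flux: "(\<Sum>z\<in>A. incidence T a z) = sum flux (T \<inter> {e})" if "T \<subseteq> R" for T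
  proof -
    have "finite T" using that assms(1) by (rule finite_subset)
    with that no_crossing have "sum flux T = sum flux (T \<inter> {e})"
      by (intro sum.mono_neutral_right) (auto simp: flux_def)
    then show ?thesis by (simp add: sum_incidence_eq_flux[OF assms(4)] flux_def)
  qed
  have "sum flux (R \<inter> {e}) = 0"
    using local_flux[of R] ker by simp
  moreover have "S \<inter> {e} = R \<inter> {e} \<or> S \<inter> {e} = {}"
    using assms(2) by blast
  ultimately show ?thesis
    using local_flux[OF assms(2)] by auto
qed

lemma is_path_drop:
  assumes "is_path S (vs, es) x y" and "j < length vs"
  shows "is_path S (drop j vs, drop j es) (vs ! j) y"
  using assms by (auto simp: is_path_def Let_def hd_drop_conv_nth)

lemma is_path_Cons:
  assumes "is_path S (vs, es) w y" and "x \<notin> set vs" and "e \<in> S" and "e = (x, w) \<or> e = (w, x)"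
  shows "is_path S (x # vs, e # es) x y"
  using assms by (cases vs) (auto simp: is_path_def Let_def nth_Cons split: nat.split)

lemma rtrancl_imp_is_path:
  assumes "(x, y) \<in> (S \<union> S\<inverse>)\<^sup>*"
  shows "\<exists>p. is_path S p x y"
  using assms
proof (induction rule: converse_rtrancl_induct)
  case base
  have "is_path S ([y], []) y y" by (simp add: is_path_def)
  then show ?case by blast
next
  case (step x w)
  then obtain vs es where p: "is_path S (vs, es) w y" by auto
  show ?case
  proof (cases "x \<in> set vs")
    case True
    then obtain j where "j < length vs" "vs ! j = x" by (auto simp: in_set_conv_nth)
    with is_path_drop[OF p] show ?thesis by metis
  next
    case False
    from step.hyps(1) obtain e where "e \<in> S" "e = (x, w) \<or> e = (w, x)" by blast
    with is_path_Cons[OF p False] show ?thesis by blast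
  qed
qed

lemma is_path_mono: "is_path S p x y \<Longrightarrow> S \<subseteq> T \<Longrightarrow> is_path T p x y"
  unfolding is_path_def Let_def by blast

lemma is_path_edges: "is_path S p x y \<Longrightarrow> set (snd p) \<subseteq> S"
  unfolding is_path_def Let_def by (auto simp: in_set_conv_nth) metis

lemma is_path_nonempty:
  assumes "is_path S p x y" and "x \<noteq> y"
  shows "snd p \<noteq> []"
proof
  assume "snd p = []"
  with assms(1) obtain v where "fst p = [v]" "hd (fst p) = x" "last (fst p) = y"
    by (auto simp: is_path_def Let_def length_Suc_conv)
  with assms(2) show False by simp
qed

lemma unique_path_edge_separates:
  assumes uniq: "\<And>q. is_path R q x y \<Longrightarrow> q = p" and e: "e \<in> set (snd p)"
  shows "(x, y) \<notin> ((R - {e}) \<union> (R - {e})\<inverse>)\<^sup>*"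
proof
  assume "(x, y) \<in> ((R - {e}) \<union> (R - {e})\<inverse>)\<^sup>*"
  from rtrancl_imp_is_path[OF this] obtain q where q: "is_path (R - {e}) q x y"
    by blast
  then have "is_path R q x y"
    using Diff_subset by (rule is_path_mono)
  then have "q = p" by (rule uniq)
  with is_path_edges[OF q] e show False by auto
qed

lemma rtrancl_sym_edge_closed:
  assumes "(u, v) \<in> E"
  shows "(x, u) \<in> (E \<union> E\<inverse>)\<^sup>* \<longleftrightarrow> (x, v) \<in> (E \<union> E\<inverse>)\<^sup>*"
  using assms by (meson UnI1 UnI2 converseI rtrancl_into_rtrancl)

lemma linkage_class_edge_closed:
  assumes "L \<in> linkage_classes R" and "(u, v) \<in> R"
  shows "u \<in> L \<longleftrightarrow> v \<in> L"
proof -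
  obtain c where "L = linked R `` {c}"
    using assms(1) unfolding linkage_classes_def by (rule quotientE)
  moreover from assms(2) have "u \<in> complexes R" "v \<in> complexes R"
    by (force simp: complexes_def)+
  ultimately show ?thesis
    unfolding linked_def using rtrancl_sym_edge_closed[OF assms(2), of c] by simp
qed

lemma linkage_class_rtrancl_closed:
  assumes "L \<in> linkage_classes R" and "S \<subseteq> R" and "x \<in> L" and "(x, y) \<in> (S \<union> S\<inverse>)\<^sup>*"
  shows "y \<in> L"
  using assms(4)
proof induction
  case base
  show ?case by (rule assms(3))
next
  case (step y z)
  with assms(2) have "(y, z) \<in> R \<or> (z, y) \<in> R" by blast
  with step.IH show ?case
    using linkage_class_edge_closed[OF assms(1)] by blast
qed

lemma linkage_class_subset_complexes: "L \<in> linkage_classes R \<Longrightarrow> L \<subseteq> complexes R"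
  unfolding linkage_classes_def linked_def by (auto elim: quotientE)

lemma finite_linkage_class:
  assumes "finite R" and "L \<in> linkage_classes R"
  shows "finite L"
proof (rule finite_subset)
  show "L \<subseteq> complexes R" using assms(2) by (rule linkage_class_subset_complexes)
  show "finite (complexes R)" using assms(1) by (simp add: complexes_def)
qed

lemma linkage_class_exists:
  assumes "z \<in> complexes R"
  shows "\<exists>L\<in>linkage_classes R. z \<in> L"
proof
  show "linked R `` {z} \<in> linkage_classes R"
    unfolding linkage_classes_def using assms by (rule quotientI)
  show "z \<in> linked R `` {z}"
    unfolding linked_def using assms by simp
qed

lemma incidence_eq_0_at_ends_of_unique_path:
  assumes "finite R" and "S \<subseteq> R" and ker: "incidence R a = (\<lambda>_. 0)"
    and L: "L \<in> linkage_classes R" and "x \<in> L" and "y \<in> L" and "x \<noteq> y"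
    and uniq: "\<exists>!p. is_path R p x y"
    and vanish: "\<And>z. z \<in> L - {x, y} \<Longrightarrow> incidence S a z = 0"
  shows "incidence S a x = 0 \<and> incidence S a y = 0"
proof -
  obtain p where p: "is_path R p x y" and p_unique: "\<And>q. is_path R q x y \<Longrightarrow> q = p"
    using uniq by blast
  obtain e where e: "e \<in> set (snd p)"
    using is_path_nonempty[OF p \<open>x \<noteq> y\<close>] by (meson list.set_sel(1))
  define A where "A = {z. (x, z) \<in> ((R - {e}) \<union> (R - {e})\<inverse>)\<^sup>*}"
  have finL: "finite L" using assms(1) L by (rule finite_linkage_class)
  have "A \<subseteq> L"
    unfolding A_def using linkage_class_rtrancl_closed[OF L Diff_subset \<open>x \<in> L\<close>] by blast
  then have finA: "finite A" using finL by (rule finite_subset)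
  have "y \<notin> A"
    using unique_path_edge_separates[OF p_unique e] by (simp add: A_def)
  have "(\<Sum>z\<in>A. incidence S a z) = (\<Sum>z\<in>{x}. incidence S a z)"
  proof (rule sum.mono_neutral_right[OF finA])
    show "{x} \<subseteq> A" by (simp add: A_def)
    show "\<forall>z\<in>A - {x}. incidence S a z = 0"
      using vanish \<open>A \<subseteq> L\<close> \<open>y \<notin> A\<close> by blast
  qed
  moreover have "(\<Sum>z\<in>A. incidence S a z) = 0"
  proof (rule sum_incidence_eq_0_if_one_crossing[OF assms(1,2) ker finA], intro ballI)
    fix r assume "r \<in> R - {e}"
    then show "fst r \<in> A \<longleftrightarrow> snd r \<in> A"
      unfolding A_def using rtrancl_sym_edge_closed[of "fst r" "snd r" "R - {e}" x] by simp
  qed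
  moreover have "(\<Sum>z\<in>L. incidence S a z) = (\<Sum>z\<in>{x, y}. incidence S a z)"
    using vanish assms(5,6) by (intro sum.mono_neutral_right[OF finL]) auto
  moreover have "(\<Sum>z\<in>L. incidence S a z) = 0"
  proof (rule sum_incidence_eq_0_if_one_crossing[OF assms(1,2) ker finL], intro ballI)
    fix r assume "r \<in> R - {e}"
    then show "fst r \<in> L \<longleftrightarrow> snd r \<in> L"
      using linkage_class_edge_closed[OF L, of "fst r" "snd r"] by simp
  qed
  ultimately show ?thesis using \<open>x \<noteq> y\<close> by simp
qed

theorem proposition8:
  fixes R :: "('c \<times> 'c) set" and k :: nat and Rs :: "nat \<Rightarrow> ('c \<times> 'c) set"
  assumes "crn R"
    and "CD_decomposition R k Rs"
    and "real (card (common_complexes k Rs)) / 2 < real (n_lc R)"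
    and "\<forall>L \<in> linkage_classes R.
           L \<inter> common_complexes k Rs = {} \<or>
           (\<exists>a b. a \<noteq> b \<and> L \<inter> common_complexes k Rs = {a, b} \<and>
                  (\<exists>!p. is_path R p a b))"
  shows "incidence_independent R k Rs"
proof -
  from assms(1) have fin: "finite R" by (simp add: crn_def)
  from assms(2) have dec: "decomposition R k Rs" by (simp add: CD_decomposition_def)
  show ?thesis
  proof (rule incidence_independentI[OF fin dec], rule ext)
    fix a i z
    assume ker: "incidence R a = (\<lambda>_. 0)" and "i < k"
    note not_common = incidence_block_eq_0_if_not_common[OF fin dec ker \<open>i < k\<close>]
    show "incidence (Rs i) a z = 0"
    proof (cases "z \<in> common_complexes k Rs")
      case True
      with common_complexes_subset[OF dec] have "z \<in> complexes R" by blast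
      from linkage_class_exists[OF this] obtain L where L: "L \<in> linkage_classes R" "z \<in> L"
        by blast
      from assms(4) L(1) have "L \<inter> common_complexes k Rs = {} \<or>
          (\<exists>x y. x \<noteq> y \<and> L \<inter> common_complexes k Rs = {x, y} \<and> (\<exists>!p. is_path R p x y))"
        by (rule bspec)
      moreover have "L \<inter> common_complexes k Rs \<noteq> {}" using True L(2) by blast
      ultimately obtain x y where xy: "x \<noteq> y" "L \<inter> common_complexes k Rs = {x, y}"
        and "\<exists>!p. is_path R p x y"
        by blast
      then have "incidence (Rs i) a x = 0 \<and> incidence (Rs i) a y = 0"
        using not_common decomposition_block_subset[OF dec \<open>i < k\<close>]
        by (intro incidence_eq_0_at_ends_of_unique_path[OF fin _ ker L(1)]) auto
      moreover have "z = x \<or> z = y" using L(2) True xy(2) by blast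
      ultimately show ?thesis by auto
    qed (rule not_common)
  qed
qed

end
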